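(* Let $C>0$ and let $Q,\widehat Q$ be probability measures supported on $B:=\{x\in\mathbb{R}^d:\|x\|_2\le C\}$. Let $a:B\to[0,1]$ satisfy $a(x)\ge a_0>0$ for all $x\in B$, and suppose $a$ is $L_a$-Lipschitz. Define the reweighted laws $$\mathcal R_a(Q)(dx):=\frac{a(x)}{\mathbb E_Q[a(X)]}Q(dx),\qquad \mathcal R_a(\widehat Q)(dx):=\frac{a(x)}{\mathbb E_{\widehat Q}[a(X)]}\widehat Q(dx).$$ Then $$\mathcal W_2(\mathcal R_a(Q),\mathcal R_a(\widehat Q))\le\sqrt{\frac{2C(1+2CL_a)}{a_0}\,\mathcal W_2(Q,\widehat Q)}.$$
   Context: $\mathcal W_2$ is the Wasserstein-2 distance with Euclidean cost. *)

theory Defs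
  imports "HOL-Probability.Probability"
begin

definition couplings :: "'a::euclidean_space measure \<Rightarrow> 'a measure \<Rightarrow> ('a \<times> 'a) measure set" where
  "couplings M N = {K. sets K = sets borel \<and> prob_space K \<and>
                        distr K borel fst = M \<and> distr K borel snd = N}"

definition W2 :: "'a::euclidean_space measure \<Rightarrow> 'a measure \<Rightarrow> real" where
  "W2 M N = sqrt (enn2real (INF K \<in> couplings M N.
       \<integral>\<^sup>+ z. ennreal ((dist (fst z) (snd z))\<^sup>2) \<partial>K))"

definition reweight :: "('a \<Rightarrow> real) \<Rightarrow> 'a measure \<Rightarrow> 'a measure" where
  "reweight a Q = density Q (\<lambda>x. ennreal (a x / (\<integral>y. a y \<partial>Q)))"

end

(*
  Fix a coupling P of Q and Qh. Relative to P, the reweighted laws have densities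
  u(x,y) = a(x) / E_Q[a] and v(x,y) = a(y) / E_Qh[a]. Leave the common part min(u,v) P
  where it is and couple the remaining mass m = (1/2) E_P|u - v| independently. The common
  part costs at most (2C/a0) E_P|X - Y|, the independent part at most (2C)^2 m, and the
  Lipschitz bound on a gives m <= La E_P|X - Y| / a0. So the squared W2 distance of the
  reweighted laws is at most K E_P|X - Y| <= K (E_P|X - Y|^2)^(1/2) with
  K = 2C (1 + 2C La) / a0, and the infimum over P yields the claim.
*)
theory Submission
  imports Defs
begin

(* M + N, as a mixture over the counting measure on bool; the Giry monad needs
   subprobability measures as summands. *)
definition add_measure :: "'a measure \<Rightarrow> 'a measure \<Rightarrow> 'a measure" where
  "add_measure M N = count_space UNIV \<bind> (\<lambda>b::bool. if b then M else N)"

lemma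
  assumes "sets N = sets M" "subprob_space M" "subprob_space N"
  shows sets_add_measure: "sets (add_measure M N) = sets M"
    and nn_integral_add_measure: "f \<in> borel_measurable M \<Longrightarrow>
      (\<integral>\<^sup>+x. f x \<partial>add_measure M N) = (\<integral>\<^sup>+x. f x \<partial>M) + (\<integral>\<^sup>+x. f x \<partial>N)"
proof -
  have kernel: "(\<lambda>b::bool. if b then M else N) \<in> count_space UNIV \<rightarrow>\<^sub>M subprob_algebra M"
    using assms by (auto simp: measurable_count_space_eq1 space_subprob_algebra)
  show "sets (add_measure M N) = sets M"
    unfolding add_measure_def using assms by (subst sets_bind) auto
  show "(\<integral>\<^sup>+x. f x \<partial>add_measure M N) = (\<integral>\<^sup>+x. f x \<partial>M) + (\<integral>\<^sup>+x. f x \<partial>N)"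
    if "f \<in> borel_measurable M"
    unfolding add_measure_def nn_integral_bind[OF that kernel]
    by (simp add: nn_integral_count_space_finite UNIV_bool add.commute)
qed

lemma fst_borel_measurable[measurable]:
  "fst \<in> borel_measurable (borel :: ('a::second_countable_topology \<times> 'b::second_countable_topology) measure)"
  by (simp add: borel_prod[symmetric])

lemma snd_borel_measurable[measurable]:
  "snd \<in> borel_measurable (borel :: ('a::second_countable_topology \<times> 'b::second_countable_topology) measure)"
  by (simp add: borel_prod[symmetric])

lemma ennreal_divide_mult_cancel: "r \<noteq> 0 \<Longrightarrow> 0 \<le> r \<Longrightarrow> ennreal (1 / r) * (ennreal r * x) = x"
  by (simp add: mult.assoc[symmetric] ennreal_mult[symmetric])

lemma distr_eqI_nn_integral:
  assumes "T \<in> M \<rightarrow>\<^sub>M K" "T \<in> N \<rightarrow>\<^sub>M K"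
    and "\<And>A. A \<in> sets K \<Longrightarrow> (\<integral>\<^sup>+x. indicator A (T x) \<partial>M) = (\<integral>\<^sup>+x. indicator A (T x) \<partial>N)"
  shows "distr M K T = distr N K T"
proof (rule measure_eqI)
  fix A assume "A \<in> sets (distr M K T)"
  then have "A \<in> sets K" by simp
  then show "emeasure (distr M K T) A = emeasure (distr N K T) A"
    using assms
    by (simp add: nn_integral_indicator[symmetric] nn_integral_distr del: nn_integral_indicator)
qed simp

section \<open>Couplings and the Wasserstein distance\<close>

definition transport_cost :: "('a::euclidean_space \<times> 'a) measure \<Rightarrow> ennreal" where
  "transport_cost K = (\<integral>\<^sup>+z. ennreal ((dist (fst z) (snd z))\<^sup>2) \<partial>K)"

lemma W2_eq_INF_transport_cost:
  "W2 M N = sqrt (enn2real (INF K\<in>couplings M N. transport_cost K))"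
  unfolding W2_def transport_cost_def ..

lemma couplingsD:
  assumes "P \<in> couplings M N"
  shows "sets P = sets borel" "prob_space P" "distr P borel fst = M" "distr P borel snd = N"
  using assms by (auto simp: couplings_def)

lemma W2_le_sqrt_if_coupling:
  assumes "G \<in> couplings M N" "0 \<le> t" "transport_cost G \<le> ennreal t"
  shows "W2 M N \<le> sqrt t"
proof -
  have "(INF K\<in>couplings M N. transport_cost K) \<le> ennreal t"
    using assms(1,3) by (meson INF_lower2)
  then show ?thesis
    unfolding W2_eq_INF_transport_cost using assms(2) by (simp add: enn2real_leI)
qed

lemma W2_ge_if_couplings:
  assumes "0 \<le> t" "P\<^sub>0 \<in> couplings M N" "transport_cost P\<^sub>0 < \<top>"
    and "\<And>P. P \<in> couplings M N \<Longrightarrow> ennreal (t\<^sup>2) \<le> transport_cost P"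
  shows "t \<le> W2 M N"
proof -
  let ?I = "INF K\<in>couplings M N. transport_cost K"
  have "ennreal (t\<^sup>2) \<le> ?I" using assms(4) by (rule INF_greatest)
  moreover have "?I < \<top>" using assms(2,3) by (meson INF_lower le_less_trans)
  ultimately have "t\<^sup>2 \<le> enn2real ?I"
    using enn2real_mono by fastforce
  then have "sqrt (t\<^sup>2) \<le> sqrt (enn2real ?I)" by (rule real_sqrt_le_mono)
  then show ?thesis unfolding W2_eq_INF_transport_cost using assms(1) by simp
qed

lemma pair_measure_in_couplings:
  fixes M N :: "'a::euclidean_space measure"
  assumes "prob_space M" "sets M = sets borel" "prob_space N" "sets N = sets borel"
  shows "M \<Otimes>\<^sub>M N \<in> couplings M N"
proof -
  interpret M: prob_space M by fact
  interpret N: prob_space N by fact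
  interpret MN: pair_prob_space M N ..
  have sets: "sets (M \<Otimes>\<^sub>M N) = sets borel"
    using sets_pair_measure_cong[OF assms(2,4)] by (metis borel_prod)
  have "distr (M \<Otimes>\<^sub>M N) borel fst = distr (M \<Otimes>\<^sub>M N) M fst"
    by (rule distr_cong) (auto simp: assms(2))
  also have "\<dots> = M" by (rule N.distr_pair_fst)
  finally have "distr (M \<Otimes>\<^sub>M N) borel fst = M" .
  moreover have "distr (M \<Otimes>\<^sub>M N) borel snd = distr (M \<Otimes>\<^sub>M N) N snd"
    by (rule distr_cong) (auto simp: assms(4))
  moreover have "distr (M \<Otimes>\<^sub>M N) N snd = N"
  proof (rule measure_eqI)
    fix A assume "A \<in> sets (distr (M \<Otimes>\<^sub>M N) N snd)"
    then have A: "A \<in> sets N" by simp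
    have "snd -` A \<inter> space (M \<Otimes>\<^sub>M N) = space M \<times> A"
      using sets.sets_into_space[OF A] by (auto simp: space_pair_measure)
    then show "emeasure (distr (M \<Otimes>\<^sub>M N) N snd) A = emeasure N A"
      using A by (simp add: emeasure_distr N.emeasure_pair_measure_Times M.emeasure_space_1)
  qed simp
  ultimately show ?thesis
    unfolding couplings_def using sets MN.prob_space_axioms by auto
qed

lemma AE_coupling_fst_snd:
  assumes "P \<in> couplings M N" "AE x in M. x \<in> S" "AE y in N. y \<in> T"
    and [measurable]: "S \<in> sets borel" "T \<in> sets borel"
  shows "AE z in P. fst z \<in> S \<and> snd z \<in> T"
proof -
  note sets_P[measurable_cong] = couplingsD(1)[OF assms(1)]
  have "AE z in P. fst z \<in> S"
    using assms(2) unfolding couplingsD(3)[OF assms(1), symmetric]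
    by (subst (asm) AE_distr_iff) auto
  moreover have "AE z in P. snd z \<in> T"
    using assms(3) unfolding couplingsD(4)[OF assms(1), symmetric]
    by (subst (asm) AE_distr_iff) auto
  ultimately show ?thesis by auto
qed

lemma dist_le_if_in_cball:
  fixes x y :: "'a::real_normed_vector"
  assumes "x \<in> cball 0 C" "y \<in> cball 0 C"
  shows "dist x y \<le> 2 * C"
proof -
  have "dist x y \<le> dist x 0 + dist 0 y" by (rule dist_triangle)
  with assms show ?thesis by (simp add: dist_commute)
qed

lemma transport_cost_le_if_cball_supported:
  assumes "P \<in> couplings M N" "AE x in M. x \<in> cball 0 C" "AE y in N. y \<in> cball 0 C"
  shows "transport_cost P \<le> ennreal ((2 * C)\<^sup>2)"
proof -
  interpret P: prob_space P using couplingsD(2)[OF assms(1)] .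
  have "AE z in P. fst z \<in> cball 0 C \<and> snd z \<in> cball 0 C"
    by (rule AE_coupling_fst_snd[OF assms]) auto
  then have "transport_cost P \<le> (\<integral>\<^sup>+z. ennreal ((2 * C)\<^sup>2) \<partial>P)"
    unfolding transport_cost_def
  proof (intro nn_integral_mono_AE, eventually_elim)
    case (elim z)
    then have "dist (fst z) (snd z) \<le> 2 * C" by (auto intro: dist_le_if_in_cball)
    then show ?case by (intro ennreal_leI power_mono) auto
  qed
  then show ?thesis by (simp add: P.emeasure_space_1)
qed

lemma expected_dist_squared_le_transport_cost:
  fixes P :: "('a::euclidean_space \<times> 'a) measure"
  assumes "prob_space P" "sets P = sets borel"
  shows "ennreal ((\<integral>z. dist (fst z) (snd z) \<partial>P)\<^sup>2) \<le> transport_cost P"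
proof (cases "integrable P (\<lambda>z. dist (fst z) (snd z))")
  case True
  interpret P: prob_space P by fact
  have [measurable]: "(\<lambda>z. dist (fst z) (snd z)) \<in> borel_measurable P"
    using assms(2) by (simp add: measurable_cong_sets[OF assms(2) refl])
  have "ennreal ((\<integral>z. dist (fst z) (snd z) \<partial>P)\<^sup>2) = (\<integral>\<^sup>+z. ennreal (dist (fst z) (snd z)) * 1 \<partial>P)\<^sup>2"
    using True by (simp add: nn_integral_eq_integral ennreal_power[symmetric])
  also have "\<dots> \<le> (\<integral>\<^sup>+z. ennreal (dist (fst z) (snd z)) ^ 2 \<partial>P) * (\<integral>\<^sup>+z. 1 ^ 2 \<partial>P)"
    by (rule Cauchy_Schwarz_nn_integral) auto
  also have "\<dots> = transport_cost P"
    by (simp add: transport_cost_def ennreal_power P.emeasure_space_1)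
  finally show ?thesis .
next
  case False
  then show ?thesis by (simp add: not_integrable_integral_eq)
qed

lemma W2_le_sqrt_mult_W2_if_expected_dist_bound:
  assumes "0 < K" "P\<^sub>0 \<in> couplings Q Qh" "transport_cost P\<^sub>0 < \<top>"
    and bound: "\<And>P. P \<in> couplings Q Qh \<Longrightarrow> W2 M N \<le> sqrt (K * (\<integral>z. dist (fst z) (snd z) \<partial>P))"
  shows "W2 M N \<le> sqrt (K * W2 Q Qh)"
proof -
  have W2_nonneg: "0 \<le> W2 M N" by (simp add: W2_def)
  have "(W2 M N)\<^sup>2 / K \<le> W2 Q Qh"
  proof (rule W2_ge_if_couplings[OF _ assms(2,3)])
    fix P assume P: "P \<in> couplings Q Qh"
    let ?D = "\<integral>z. dist (fst z) (snd z) \<partial>P"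
    have "0 \<le> ?D" by simp
    have "(W2 M N)\<^sup>2 \<le> (sqrt (K * ?D))\<^sup>2"
      using bound[OF P] W2_nonneg by (rule power_mono)
    then have "(W2 M N)\<^sup>2 / K \<le> ?D"
      using \<open>0 < K\<close> \<open>0 \<le> ?D\<close> by (simp add: divide_le_eq mult.commute)
    then have "((W2 M N)\<^sup>2 / K)\<^sup>2 \<le> ?D\<^sup>2"
      using \<open>0 < K\<close> by (intro power_mono) auto
    then have "ennreal (((W2 M N)\<^sup>2 / K)\<^sup>2) \<le> ennreal (?D\<^sup>2)"
      by (rule ennreal_leI)
    also have "\<dots> \<le> transport_cost P"
      using couplingsD[OF P] by (intro expected_dist_squared_le_transport_cost)
    finally show "ennreal (((W2 M N)\<^sup>2 / K)\<^sup>2) \<le> transport_cost P" .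
  qed (use \<open>0 < K\<close> in simp)
  then have "(W2 M N)\<^sup>2 \<le> K * W2 Q Qh"
    using \<open>0 < K\<close> by (simp add: divide_le_eq mult.commute)
  then show ?thesis by (rule real_le_rsqrt)
qed

lemma reweight_cong_AE:
  assumes "AE x in Q. a x = b x" "a \<in> borel_measurable Q" "b \<in> borel_measurable Q"
  shows "reweight a Q = reweight b Q"
proof -
  have "(\<integral>x. a x \<partial>Q) = (\<integral>x. b x \<partial>Q)"
    using assms by (intro integral_cong_AE) auto
  then show ?thesis
    unfolding reweight_def using assms by (intro density_cong) (auto elim!: eventually_mono)
qed

section \<open>Gluing a coupling along two densities\<close>

locale reweighted_coupling =
  fixes P :: "('a::second_countable_topology \<times> 'b::second_countable_topology) measure"
    and u v :: "'a \<times> 'b \<Rightarrow> real"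
  assumes prob_space_P: "prob_space P" and sets_P[measurable_cong]: "sets P = sets borel"
    and u_measurable[measurable]: "u \<in> borel_measurable borel"
    and v_measurable[measurable]: "v \<in> borel_measurable borel"
    and u_nonneg: "\<And>z. 0 \<le> u z" and v_nonneg: "\<And>z. 0 \<le> v z"
    and integrable_u: "integrable P u" and integrable_v: "integrable P v"
    and integral_u: "(\<integral>z. u z \<partial>P) = 1" and integral_v: "(\<integral>z. v z \<partial>P) = 1"
begin

interpretation P: prob_space P by (rule prob_space_P)

definition common :: "'a \<times> 'b \<Rightarrow> real" where "common z = min (u z) (v z)"
definition surplus :: "'a \<times> 'b \<Rightarrow> real" where "surplus z = u z - common z"
definition deficit :: "'a \<times> 'b \<Rightarrow> real" where "deficit z = v z - common z"
definition excess :: real where "excess = (\<integral>z. surplus z \<partial>P)"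

definition excess_fst :: "'a measure" where
  "excess_fst = distr (density P (\<lambda>z. ennreal (surplus z))) borel fst"
definition excess_snd :: "'b measure" where
  "excess_snd = distr (density P (\<lambda>z. ennreal (deficit z))) borel snd"

(* If excess = 0 then 1 / excess = 0; harmless, since excess_fst is then the null measure. *)
definition glued :: "('a \<times> 'b) measure" where
  "glued = add_measure (density P (\<lambda>z. ennreal (common z)))
     (scale_measure (ennreal (1 / excess)) (excess_fst \<Otimes>\<^sub>M excess_snd))"

lemma common_measurable[measurable]: "common \<in> borel_measurable borel"
  and surplus_measurable[measurable]: "surplus \<in> borel_measurable borel"
  and deficit_measurable[measurable]: "deficit \<in> borel_measurable borel"
  unfolding common_def[abs_def] surplus_def[abs_def] deficit_def[abs_def] by measurable

lemma common_nonneg: "0 \<le> common z" and common_le_u: "common z \<le> u z"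
  and surplus_nonneg: "0 \<le> surplus z" and deficit_nonneg: "0 \<le> deficit z"
  and surplus_plus_deficit: "surplus z + deficit z = \<bar>u z - v z\<bar>"
  using u_nonneg[of z] v_nonneg[of z] by (auto simp: common_def surplus_def deficit_def)

lemma integrable_common: "integrable P common"
  by (rule Bochner_Integration.integrable_bound[OF integrable_u])
     (auto simp: common_nonneg common_le_u u_nonneg)

lemma integrable_surplus: "integrable P surplus" and integrable_deficit: "integrable P deficit"
  unfolding surplus_def[abs_def] deficit_def[abs_def]
  using integrable_u integrable_v integrable_common by auto

lemma integral_deficit: "(\<integral>z. deficit z \<partial>P) = excess"
  using integrable_u integrable_v integrable_common
  by (simp add: excess_def surplus_def[abs_def] deficit_def[abs_def] integral_u integral_v)

lemma excess_nonneg: "0 \<le> excess"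
  unfolding excess_def by (simp add: surplus_nonneg)

lemma excess_le_1: "excess \<le> 1"
proof -
  have "excess \<le> (\<integral>z. u z \<partial>P)" unfolding excess_def
    by (rule integral_mono[OF integrable_surplus integrable_u])
       (simp add: surplus_def common_nonneg)
  then show ?thesis by (simp add: integral_u)
qed

lemma excess_eq_half_L1_distance: "excess = (\<integral>z. \<bar>u z - v z\<bar> \<partial>P) / 2"
  using integrable_surplus integrable_deficit integral_deficit
  by (simp add: surplus_plus_deficit[symmetric] excess_def)

lemma nn_integral_surplus: "(\<integral>\<^sup>+z. ennreal (surplus z) \<partial>P) = ennreal excess"
  unfolding excess_def using integrable_surplus
  by (simp add: nn_integral_eq_integral surplus_nonneg)

lemma nn_integral_deficit: "(\<integral>\<^sup>+z. ennreal (deficit z) \<partial>P) = ennreal excess"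
  unfolding integral_deficit[symmetric] using integrable_deficit
  by (simp add: nn_integral_eq_integral deficit_nonneg)

lemma sets_excess_fst[measurable_cong]: "sets excess_fst = sets borel"
  and sets_excess_snd[measurable_cong]: "sets excess_snd = sets borel"
  by (simp_all add: excess_fst_def excess_snd_def)

lemma nn_integral_excess_fst:
  "f \<in> borel_measurable borel \<Longrightarrow>
    (\<integral>\<^sup>+x. f x \<partial>excess_fst) = (\<integral>\<^sup>+z. ennreal (surplus z) * f (fst z) \<partial>P)"
  unfolding excess_fst_def by (simp add: nn_integral_distr nn_integral_density)

lemma nn_integral_excess_snd:
  "f \<in> borel_measurable borel \<Longrightarrow>
    (\<integral>\<^sup>+y. f y \<partial>excess_snd) = (\<integral>\<^sup>+z. ennreal (deficit z) * f (snd z) \<partial>P)"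
  unfolding excess_snd_def by (simp add: nn_integral_distr nn_integral_density)

lemma emeasure_excess_fst: "emeasure excess_fst (space excess_fst) = ennreal excess"
  and emeasure_excess_snd: "emeasure excess_snd (space excess_snd) = ennreal excess"
  using nn_integral_excess_fst[of "\<lambda>_. 1"] nn_integral_excess_snd[of "\<lambda>_. 1"]
  by (simp_all add: nn_integral_surplus nn_integral_deficit)

interpretation excess_fst: finite_measure excess_fst
  by (rule finite_measureI) (simp add: emeasure_excess_fst)

interpretation excess_snd: finite_measure excess_snd
  by (rule finite_measureI) (simp add: emeasure_excess_snd)

lemma AE_surplus_eq_0: "excess = 0 \<Longrightarrow> AE z in P. surplus z = 0"
  unfolding excess_def using integrable_surplus
  by (subst (asm) integral_nonneg_eq_0_iff_AE) (auto simp: surplus_nonneg)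

lemma AE_deficit_eq_0: "excess = 0 \<Longrightarrow> AE z in P. deficit z = 0"
  unfolding integral_deficit[symmetric] using integrable_deficit
  by (subst (asm) integral_nonneg_eq_0_iff_AE) (auto simp: deficit_nonneg)

lemma sets_excess_product: "sets (excess_fst \<Otimes>\<^sub>M excess_snd) = sets borel"
  using sets_pair_measure_cong[OF sets_excess_fst sets_excess_snd] by (metis borel_prod)

lemma nn_integral_excess_product:
  "f \<in> borel_measurable borel \<Longrightarrow>
    (\<integral>\<^sup>+z. f z \<partial>(excess_fst \<Otimes>\<^sub>M excess_snd)) = (\<integral>\<^sup>+x. \<integral>\<^sup>+y. f (x, y) \<partial>excess_snd \<partial>excess_fst)"
  by (rule excess_snd.nn_integral_fst[symmetric]) (simp add: measurable_cong_sets[OF sets_excess_product])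

lemma nn_integral_excess_product_fst:
  assumes [measurable]: "f \<in> borel_measurable borel"
  shows "ennreal (1 / excess) * (\<integral>\<^sup>+z. f (fst z) \<partial>(excess_fst \<Otimes>\<^sub>M excess_snd))
    = (\<integral>\<^sup>+z. ennreal (surplus z) * f (fst z) \<partial>P)"
proof (cases "excess = 0")
  case True
  then show ?thesis
    using AE_surplus_eq_0 by (auto intro!: nn_integral_zero' elim!: eventually_mono)
next
  case False
  have "(\<integral>\<^sup>+z. f (fst z) \<partial>(excess_fst \<Otimes>\<^sub>M excess_snd)) = (\<integral>\<^sup>+x. f x * ennreal excess \<partial>excess_fst)"
    by (simp add: nn_integral_excess_product emeasure_excess_snd)
  also have "\<dots> = (\<integral>\<^sup>+z. ennreal (surplus z) * f (fst z) \<partial>P) * ennreal excess"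
    by (simp add: nn_integral_multc nn_integral_excess_fst)
  finally show ?thesis
    using False excess_nonneg by (simp add: mult.commute[of _ "ennreal excess"] ennreal_divide_mult_cancel)
qed

lemma nn_integral_excess_product_snd:
  assumes [measurable]: "f \<in> borel_measurable borel"
  shows "ennreal (1 / excess) * (\<integral>\<^sup>+z. f (snd z) \<partial>(excess_fst \<Otimes>\<^sub>M excess_snd))
    = (\<integral>\<^sup>+z. ennreal (deficit z) * f (snd z) \<partial>P)"
proof (cases "excess = 0")
  case True
  then show ?thesis
    using AE_deficit_eq_0 by (auto intro!: nn_integral_zero' elim!: eventually_mono)
next
  case False
  have "(\<integral>\<^sup>+z. f (snd z) \<partial>(excess_fst \<Otimes>\<^sub>M excess_snd)) = (\<integral>\<^sup>+x. (\<integral>\<^sup>+y. f y \<partial>excess_snd) \<partial>excess_fst)"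
    by (simp add: nn_integral_excess_product)
  also have "\<dots> = ennreal excess * (\<integral>\<^sup>+z. ennreal (deficit z) * f (snd z) \<partial>P)"
    by (simp add: nn_integral_excess_snd emeasure_excess_fst mult.commute)
  finally show ?thesis
    using False excess_nonneg by (simp add: ennreal_divide_mult_cancel)
qed

lemma nn_integral_u: "(\<integral>\<^sup>+z. ennreal (u z) \<partial>P) = 1"
  using integrable_u by (simp add: nn_integral_eq_integral u_nonneg integral_u)

lemma subprob_space_common_part: "subprob_space (density P (\<lambda>z. ennreal (common z)))"
proof (rule subprob_spaceI)
  have "(\<integral>\<^sup>+z. ennreal (common z) \<partial>P) \<le> (\<integral>\<^sup>+z. ennreal (u z) \<partial>P)"
    by (intro nn_integral_mono ennreal_leI common_le_u)
  then show "emeasure (density P (\<lambda>z. ennreal (common z))) (space (density P (\<lambda>z. ennreal (common z)))) \<le> 1"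
    by (simp add: emeasure_density nn_integral_u)
qed (simp add: sets_eq_imp_space_eq[OF sets_P])

lemma subprob_space_excess_part:
  "subprob_space (scale_measure (ennreal (1 / excess)) (excess_fst \<Otimes>\<^sub>M excess_snd))"
proof (rule subprob_spaceI)
  have "emeasure (excess_fst \<Otimes>\<^sub>M excess_snd) (space (excess_fst \<Otimes>\<^sub>M excess_snd))
      = ennreal excess * ennreal excess"
    by (simp add: space_pair_measure excess_snd.emeasure_pair_measure_Times
        emeasure_excess_fst emeasure_excess_snd)
  then show "emeasure (scale_measure (ennreal (1 / excess)) (excess_fst \<Otimes>\<^sub>M excess_snd))
      (space (scale_measure (ennreal (1 / excess)) (excess_fst \<Otimes>\<^sub>M excess_snd))) \<le> 1"
    using excess_nonneg excess_le_1
    by (cases "excess = 0") (simp_all add: space_scale_measure ennreal_divide_mult_cancel)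
qed (simp add: space_scale_measure space_pair_measure sets_eq_imp_space_eq[OF sets_excess_fst]
       sets_eq_imp_space_eq[OF sets_excess_snd])

lemma sets_glued[measurable_cong]: "sets glued = sets borel"
  unfolding glued_def using subprob_space_common_part subprob_space_excess_part
  by (subst sets_add_measure) (simp_all add: sets_excess_product sets_P)

lemma nn_integral_glued:
  assumes [measurable]: "f \<in> borel_measurable borel"
  shows "(\<integral>\<^sup>+z. f z \<partial>glued) = (\<integral>\<^sup>+z. ennreal (common z) * f z \<partial>P)
    + ennreal (1 / excess) * (\<integral>\<^sup>+z. f z \<partial>(excess_fst \<Otimes>\<^sub>M excess_snd))"
  unfolding glued_def using subprob_space_common_part subprob_space_excess_part
  by (subst nn_integral_add_measure)
     (simp_all add: sets_excess_product sets_P nn_integral_density nn_integral_scale_measure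
       measurable_cong_sets[OF sets_excess_product])

lemma ennreal_common_plus_surplus: "ennreal (common z) + ennreal (surplus z) = ennreal (u z)"
  and ennreal_common_plus_deficit: "ennreal (common z) + ennreal (deficit z) = ennreal (v z)"
  using ennreal_plus[OF common_nonneg[of z] surplus_nonneg[of z]]
    ennreal_plus[OF common_nonneg[of z] deficit_nonneg[of z]]
  by (simp_all add: surplus_def deficit_def)

lemma nn_integral_glued_fst:
  assumes [measurable]: "f \<in> borel_measurable borel"
  shows "(\<integral>\<^sup>+z. f (fst z) \<partial>glued) = (\<integral>\<^sup>+z. ennreal (u z) * f (fst z) \<partial>P)"
proof -
  have "(\<integral>\<^sup>+z. f (fst z) \<partial>glued)
      = (\<integral>\<^sup>+z. ennreal (common z) * f (fst z) \<partial>P) + (\<integral>\<^sup>+z. ennreal (surplus z) * f (fst z) \<partial>P)"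
    by (simp add: nn_integral_glued nn_integral_excess_product_fst)
  also have "\<dots> = (\<integral>\<^sup>+z. (ennreal (common z) + ennreal (surplus z)) * f (fst z) \<partial>P)"
    by (simp add: nn_integral_add distrib_right)
  finally show ?thesis by (simp add: ennreal_common_plus_surplus)
qed

lemma nn_integral_glued_snd:
  assumes [measurable]: "f \<in> borel_measurable borel"
  shows "(\<integral>\<^sup>+z. f (snd z) \<partial>glued) = (\<integral>\<^sup>+z. ennreal (v z) * f (snd z) \<partial>P)"
proof -
  have "(\<integral>\<^sup>+z. f (snd z) \<partial>glued)
      = (\<integral>\<^sup>+z. ennreal (common z) * f (snd z) \<partial>P) + (\<integral>\<^sup>+z. ennreal (deficit z) * f (snd z) \<partial>P)"
    by (simp add: nn_integral_glued nn_integral_excess_product_snd)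
  also have "\<dots> = (\<integral>\<^sup>+z. (ennreal (common z) + ennreal (deficit z)) * f (snd z) \<partial>P)"
    by (simp add: nn_integral_add distrib_right)
  finally show ?thesis by (simp add: ennreal_common_plus_deficit)
qed

lemma prob_space_glued: "prob_space glued"
proof (rule prob_spaceI)
  show "emeasure glued (space glued) = 1"
    using nn_integral_glued_fst[of "\<lambda>_. 1"] by (simp add: nn_integral_u)
qed

lemma distr_glued_fst: "distr glued borel fst = distr (density P (\<lambda>z. ennreal (u z))) borel fst"
  by (rule distr_eqI_nn_integral)
     (simp_all add: measurable_cong_sets[OF sets_glued] nn_integral_glued_fst nn_integral_density)

lemma distr_glued_snd: "distr glued borel snd = distr (density P (\<lambda>z. ennreal (v z))) borel snd"
  by (rule distr_eqI_nn_integral)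
     (simp_all add: measurable_cong_sets[OF sets_glued] nn_integral_glued_snd nn_integral_density)

lemma nn_integral_glued_le:
  assumes [measurable]: "c \<in> borel_measurable borel" "S \<in> sets borel" "T \<in> sets borel"
    and support: "AE z in P. fst z \<in> S \<and> snd z \<in> T"
    and bound: "\<And>x y. x \<in> S \<Longrightarrow> y \<in> T \<Longrightarrow> c (x, y) \<le> B"
  shows "(\<integral>\<^sup>+z. c z \<partial>glued) \<le> (\<integral>\<^sup>+z. ennreal (common z) * c z \<partial>P) + B * ennreal excess"
proof -
  have "AE z in P. fst z \<in> S" "AE z in P. snd z \<in> T"
    using support by auto
  then have support_fst: "AE x in excess_fst. x \<in> S" and support_snd: "AE y in excess_snd. y \<in> T"
    unfolding excess_fst_def excess_snd_def
    by (subst AE_distr_iff; simp add: AE_density eventually_mono)+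
  have "(\<integral>\<^sup>+z. c z \<partial>(excess_fst \<Otimes>\<^sub>M excess_snd))
      = (\<integral>\<^sup>+x. \<integral>\<^sup>+y. c (x, y) \<partial>excess_snd \<partial>excess_fst)"
    by (simp add: nn_integral_excess_product)
  also have "\<dots> \<le> (\<integral>\<^sup>+x. \<integral>\<^sup>+y. B \<partial>excess_snd \<partial>excess_fst)"
    using support_fst
  proof (intro nn_integral_mono_AE, eventually_elim)
    case (elim x)
    show ?case
      using support_snd by (intro nn_integral_mono_AE) (auto elim!: eventually_mono intro: bound[OF \<open>x \<in> S\<close>])
  qed
  also have "\<dots> = ennreal excess * (B * ennreal excess)"
    by (simp add: emeasure_excess_fst emeasure_excess_snd mult.commute)
  finally have "ennreal (1 / excess) * (\<integral>\<^sup>+z. c z \<partial>(excess_fst \<Otimes>\<^sub>M excess_snd)) \<le> B * ennreal excess"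
    using excess_nonneg
    by (cases "excess = 0") (auto simp: ennreal_divide_mult_cancel dest: mult_left_mono[where c="ennreal (1 / excess)"])
  then show ?thesis
    by (simp add: nn_integral_glued add_left_mono)
qed

end

section \<open>Reweighting by a Lipschitz function\<close>

locale lipschitz_reweighting =
  fixes Q Qh :: "'a::euclidean_space measure" and a :: "'a \<Rightarrow> real"
    and C a0 La :: real and P :: "('a \<times> 'a) measure"
  assumes coupling: "P \<in> couplings Q Qh"
    and support_Q: "AE x in Q. x \<in> cball 0 C" and support_Qh: "AE x in Qh. x \<in> cball 0 C"
    and C_nonneg: "0 \<le> C"
    and a_measurable[measurable]: "a \<in> borel_measurable borel"
    and a0_pos: "0 < a0" and a_ge: "\<And>x. a0 \<le> a x" and a_le_1: "\<And>x. a x \<le> 1"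
    and a_lipschitz: "La-lipschitz_on (cball 0 C) a"
begin

lemma sets_P[measurable_cong]: "sets P = sets borel" and prob_space_P: "prob_space P"
  and distr_P_fst: "distr P borel fst = Q" and distr_P_snd: "distr P borel snd = Qh"
  using couplingsD[OF coupling] by auto

interpretation P: prob_space P by (rule prob_space_P)

definition Z :: real where "Z = (\<integral>x. a x \<partial>Q)"
definition Zh :: real where "Zh = (\<integral>x. a x \<partial>Qh)"
definition expected_dist :: real where "expected_dist = (\<integral>z. dist (fst z) (snd z) \<partial>P)"

lemma integral_fst: "f \<in> borel_measurable borel \<Longrightarrow> (\<integral>z. f (fst z) \<partial>P) = (\<integral>x. f x \<partial>Q)"
  for f :: "'a \<Rightarrow> real"
  unfolding distr_P_fst[symmetric] by (simp add: integral_distr)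

lemma integral_snd: "f \<in> borel_measurable borel \<Longrightarrow> (\<integral>z. f (snd z) \<partial>P) = (\<integral>x. f x \<partial>Qh)"
  for f :: "'a \<Rightarrow> real"
  unfolding distr_P_snd[symmetric] by (simp add: integral_distr)

lemma a_pos: "0 < a x"
  using a_ge[of x] a0_pos by linarith

lemma integrable_a_fst: "integrable P (\<lambda>z. a (fst z))"
  and integrable_a_snd: "integrable P (\<lambda>z. a (snd z))"
  by (auto intro!: P.integrable_const_bound[where B=1] simp: a_le_1 less_imp_le[OF a_pos])

lemma Z_bounds: "a0 \<le> Z" "Z \<le> 1" "a0 \<le> Zh" "Zh \<le> 1"
  unfolding Z_def Zh_def integral_fst[OF a_measurable, symmetric] integral_snd[OF a_measurable, symmetric]
  by (auto intro!: P.integral_ge_const P.integral_le_const integrable_a_fst integrable_a_snd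
      a_ge a_le_1)

lemma Z_pos: "0 < Z" "0 < Zh"
  using Z_bounds a0_pos by auto

lemma AE_in_cball: "AE z in P. fst z \<in> cball 0 C \<and> snd z \<in> cball 0 C"
  by (rule AE_coupling_fst_snd[OF coupling support_Q support_Qh]) auto

lemma AE_dist_le: "AE z in P. dist (fst z) (snd z) \<le> 2 * C"
  using AE_in_cball by eventually_elim (blast intro: dist_le_if_in_cball)

lemma integrable_dist: "integrable P (\<lambda>z. dist (fst z) (snd z))"
  by (rule P.integrable_const_bound[where B="2 * C"]) (use AE_dist_le in auto)

lemma expected_dist_nonneg: "0 \<le> expected_dist"
  unfolding expected_dist_def by simp

interpretation R: reweighted_coupling P "\<lambda>z. a (fst z) / Z" "\<lambda>z. a (snd z) / Zh"
proof
  show "integrable P (\<lambda>z. a (fst z) / Z)" "integrable P (\<lambda>z. a (snd z) / Zh)"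
    using integrable_a_fst integrable_a_snd by auto
  show "(\<integral>z. a (fst z) / Z \<partial>P) = 1" "(\<integral>z. a (snd z) / Zh \<partial>P) = 1"
    using integral_fst[of a] integral_snd[of a] Z_pos by (simp_all add: Z_def Zh_def)
qed (auto simp: prob_space_P sets_P less_imp_le[OF a_pos] less_imp_le[OF Z_pos(1)] less_imp_le[OF Z_pos(2)])

lemma reweight_Q_eq_distr_density: "reweight a Q = distr (density P (\<lambda>z. ennreal (a (fst z) / Z))) borel fst"
proof -
  have "reweight a Q = density (distr P borel fst) (\<lambda>x. ennreal (a x / Z))"
    by (simp add: reweight_def Z_def distr_P_fst)
  also have "\<dots> = distr (density P (\<lambda>z. ennreal (a (fst z) / Z))) borel fst"
    by (rule density_distr) auto
  finally show ?thesis .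
qed

lemma reweight_Qh_eq_distr_density: "reweight a Qh = distr (density P (\<lambda>z. ennreal (a (snd z) / Zh))) borel snd"
proof -
  have "reweight a Qh = density (distr P borel snd) (\<lambda>x. ennreal (a x / Zh))"
    by (simp add: reweight_def Zh_def distr_P_snd)
  also have "\<dots> = distr (density P (\<lambda>z. ennreal (a (snd z) / Zh))) borel snd"
    by (rule density_distr) auto
  finally show ?thesis .
qed

lemma glued_in_couplings: "R.glued \<in> couplings (reweight a Q) (reweight a Qh)"
  unfolding couplings_def reweight_Q_eq_distr_density reweight_Qh_eq_distr_density
  using R.sets_glued R.prob_space_glued R.distr_glued_fst R.distr_glued_snd by auto

lemma integrable_a_gap: "integrable P (\<lambda>z. \<bar>a (fst z) - a (snd z)\<bar>)"
  using integrable_a_fst integrable_a_snd by auto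

lemma integral_a_gap_le: "(\<integral>z. \<bar>a (fst z) - a (snd z)\<bar> \<partial>P) \<le> La * expected_dist"
proof -
  have "AE z in P. \<bar>a (fst z) - a (snd z)\<bar> \<le> La * dist (fst z) (snd z)"
    using AE_in_cball
  proof eventually_elim
    case (elim z)
    then have "dist (a (fst z)) (a (snd z)) \<le> La * dist (fst z) (snd z)"
      by (intro lipschitz_onD[OF a_lipschitz]) auto
    then show ?case by (simp add: dist_real_def)
  qed
  then have "(\<integral>z. \<bar>a (fst z) - a (snd z)\<bar> \<partial>P) \<le> (\<integral>z. La * dist (fst z) (snd z) \<partial>P)"
    by (intro integral_mono_AE integrable_a_gap) (simp add: integrable_dist)
  then show ?thesis by (simp add: expected_dist_def)
qed

lemma Z_gap_le: "\<bar>Z - Zh\<bar> \<le> (\<integral>z. \<bar>a (fst z) - a (snd z)\<bar> \<partial>P)"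
proof -
  have "Z - Zh = (\<integral>z. a (fst z) - a (snd z) \<partial>P)"
    using integral_fst[of a] integral_snd[of a] integrable_a_fst integrable_a_snd
    by (simp add: Z_def Zh_def)
  then show ?thesis by (simp add: integral_abs_bound)
qed

lemma weight_gap_le:
  "\<bar>a (fst z) / Z - a (snd z) / Zh\<bar> \<le> \<bar>a (fst z) - a (snd z)\<bar> / Z + a (snd z) * (\<bar>Z - Zh\<bar> / (Z * Zh))"
proof -
  have "a (fst z) / Z - a (snd z) / Zh = (a (fst z) - a (snd z)) / Z + a (snd z) * ((Zh - Z) / (Z * Zh))"
    using Z_pos by (simp add: field_simps)
  also have "\<bar>\<dots>\<bar> \<le> \<bar>(a (fst z) - a (snd z)) / Z\<bar> + \<bar>a (snd z) * ((Zh - Z) / (Z * Zh))\<bar>"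
    by (rule abs_triangle_ineq)
  also have "\<dots> = \<bar>a (fst z) - a (snd z)\<bar> / Z + a (snd z) * (\<bar>Z - Zh\<bar> / (Z * Zh))"
    using Z_pos a_pos[of "snd z"] by (simp add: abs_mult abs_divide abs_minus_commute)
  finally show ?thesis .
qed

lemma excess_le_expected_dist: "R.excess \<le> La * expected_dist / a0"
proof -
  let ?gap = "\<integral>z. \<bar>a (fst z) - a (snd z)\<bar> \<partial>P"
  have "2 * R.excess = (\<integral>z. \<bar>a (fst z) / Z - a (snd z) / Zh\<bar> \<partial>P)"
    by (simp add: R.excess_eq_half_L1_distance)
  also have "\<dots> \<le> (\<integral>z. \<bar>a (fst z) - a (snd z)\<bar> / Z + a (snd z) * (\<bar>Z - Zh\<bar> / (Z * Zh)) \<partial>P)"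
    by (intro integral_mono weight_gap_le)
       (use integrable_a_fst integrable_a_snd integrable_a_gap in auto)
  also have "\<dots> = ?gap / Z + Zh * (\<bar>Z - Zh\<bar> / (Z * Zh))"
    using integrable_a_gap integrable_a_snd integral_snd[of a] by (simp add: Zh_def)
  also have "\<dots> = (?gap + \<bar>Z - Zh\<bar>) / Z"
    using Z_pos by (simp add: field_simps)
  also have "\<dots> \<le> 2 * (La * expected_dist) / Z"
    using Z_gap_le integral_a_gap_le Z_pos by (intro divide_right_mono) auto
  also have "\<dots> \<le> 2 * (La * expected_dist) / a0"
    using Z_bounds a0_pos lipschitz_on_nonneg[OF a_lipschitz] expected_dist_nonneg
    by (intro divide_left_mono) auto
  finally show ?thesis by simp
qed

lemma common_cost_le:
  "(\<integral>\<^sup>+z. ennreal (R.common z) * ennreal ((dist (fst z) (snd z))\<^sup>2) \<partial>P)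
    \<le> ennreal (2 * C / a0 * expected_dist)"
proof -
  have "(\<integral>\<^sup>+z. ennreal (R.common z) * ennreal ((dist (fst z) (snd z))\<^sup>2) \<partial>P)
      \<le> (\<integral>\<^sup>+z. ennreal (2 * C / a0 * dist (fst z) (snd z)) \<partial>P)"
    using AE_dist_le
  proof (intro nn_integral_mono_AE, eventually_elim)
    case (elim z)
    have "a (fst z) / Z \<le> 1 / a0"
      using a_le_1 a_pos Z_bounds a0_pos by (intro frac_le) (auto intro: less_imp_le)
    then have "R.common z * dist (fst z) (snd z) \<le> 1 / a0 * (2 * C)"
      using elim R.common_nonneg[of z] R.common_le_u[of z] a0_pos by (intro mult_mono) auto
    then have "(R.common z * dist (fst z) (snd z)) * dist (fst z) (snd z)
        \<le> (1 / a0 * (2 * C)) * dist (fst z) (snd z)"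
      by (rule mult_right_mono) simp
    then have "R.common z * (dist (fst z) (snd z))\<^sup>2 \<le> 2 * C / a0 * dist (fst z) (snd z)"
      by (simp add: power2_eq_square mult_ac)
    then show ?case
      using R.common_nonneg[of z] by (simp add: ennreal_mult[symmetric] ennreal_leI)
  qed
  also have "\<dots> = ennreal (2 * C / a0 * expected_dist)"
    using integrable_dist C_nonneg a0_pos
    by (simp add: nn_integral_eq_integral expected_dist_def)
  finally show ?thesis .
qed

lemma transport_cost_glued_le:
  "transport_cost R.glued \<le> ennreal (2 * C * (1 + 2 * C * La) / a0 * expected_dist)"
proof -
  have bound: "ennreal ((dist x y)\<^sup>2) \<le> ennreal ((2 * C)\<^sup>2)"
    if "x \<in> cball 0 C" "y \<in> cball 0 C" for x y :: 'a
    by (meson that dist_le_if_in_cball ennreal_leI power_mono zero_le_dist)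
  have "transport_cost R.glued
      \<le> ennreal (2 * C / a0 * expected_dist) + ennreal ((2 * C)\<^sup>2) * ennreal R.excess"
    unfolding transport_cost_def
    by (rule order_trans[OF R.nn_integral_glued_le[OF _ _ _ AE_in_cball bound]
          add_right_mono[OF common_cost_le]]) auto
  also have "\<dots> = ennreal (2 * C / a0 * expected_dist + (2 * C)\<^sup>2 * R.excess)"
    using C_nonneg a0_pos expected_dist_nonneg R.excess_nonneg by (simp add: ennreal_mult ennreal_plus)
  also have "\<dots> \<le> ennreal (2 * C * (1 + 2 * C * La) / a0 * expected_dist)"
  proof (rule ennreal_leI)
    have "(2 * C)\<^sup>2 * R.excess \<le> (2 * C)\<^sup>2 * (La * expected_dist / a0)"
      using excess_le_expected_dist by (intro mult_left_mono) auto
    moreover have "2 * C / a0 * expected_dist + (2 * C)\<^sup>2 * (La * expected_dist / a0)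
        = 2 * C * (1 + 2 * C * La) / a0 * expected_dist"
      using a0_pos by (simp add: field_simps power2_eq_square)
    ultimately show "2 * C / a0 * expected_dist + (2 * C)\<^sup>2 * R.excess
        \<le> 2 * C * (1 + 2 * C * La) / a0 * expected_dist"
      by linarith
  qed
  finally show ?thesis .
qed

lemma W2_reweight_le:
  "W2 (reweight a Q) (reweight a Qh)
    \<le> sqrt (2 * C * (1 + 2 * C * La) / a0 * (\<integral>z. dist (fst z) (snd z) \<partial>P))"
  using C_nonneg a0_pos lipschitz_on_nonneg[OF a_lipschitz] expected_dist_nonneg
  unfolding expected_dist_def[symmetric]
  by (intro W2_le_sqrt_if_coupling[OF glued_in_couplings _ transport_cost_glued_le]) simp

end

theorem lemmaB7:
  fixes Q Qh :: "'a::euclidean_space measure"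
    and a :: "'a \<Rightarrow> real"
    and C a0 La :: real
  assumes "C > 0"
    and "prob_space Q" and "sets Q = sets borel"
    and "prob_space Qh" and "sets Qh = sets borel"
    and "AE x in Q. x \<in> cball 0 C"
    and "AE x in Qh. x \<in> cball 0 C"
    and "a \<in> borel_measurable borel"
    and "\<forall>x \<in> cball 0 C. 0 \<le> a x \<and> a x \<le> 1"
    and "a0 > 0"
    and "\<forall>x \<in> cball 0 C. a x \<ge> a0"
    and "La-lipschitz_on (cball 0 C) a"
  shows "W2 (reweight a Q) (reweight a Qh)
           \<le> sqrt (2 * C * (1 + 2 * C * La) / a0 * W2 Q Qh)"
proof -
  (* Clamping a to [a0, 1] changes it only off the ball, which Q and Qh do not charge. *)
  define a' where "a' x = max a0 (min 1 (a x))" for x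
  have a_eq_a': "x \<in> cball 0 C \<Longrightarrow> a x = a' x" for x
    using assms(9,11) by (auto simp: a'_def)
  have a'_measurable: "a' \<in> borel_measurable borel"
    unfolding a'_def[abs_def] using assms(8) by measurable
  have reweight_a': "reweight a M = reweight a' M"
    if "sets M = sets borel" "AE x in M. x \<in> cball 0 C" for M
    using that assms(8) a'_measurable
    by (intro reweight_cong_AE)
       (auto simp: a_eq_a' measurable_cong_sets[OF that(1)] elim!: eventually_mono)
  have "0 \<in> cball (0::'a) C" using assms(1) by simp
  then have "a0 \<le> 1" using assms(9,11) by fastforce
  then have reweighting: "lipschitz_reweighting Q Qh a' C a0 La P" if "P \<in> couplings Q Qh" for P
    using assms that a'_measurable
    by unfold_locales (auto simp: a'_def lipschitz_on_def simp flip: a_eq_a')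
  have product_coupling: "Q \<Otimes>\<^sub>M Qh \<in> couplings Q Qh"
    using assms by (intro pair_measure_in_couplings)
  have "transport_cost (Q \<Otimes>\<^sub>M Qh) < \<top>"
    using transport_cost_le_if_cball_supported[OF product_coupling assms(6,7)]
    by (simp add: le_less_trans)
  moreover have "0 < 2 * C * (1 + 2 * C * La) / a0"
    using assms lipschitz_on_nonneg[OF assms(12)] by (simp add: add_pos_nonneg)
  ultimately have "W2 (reweight a' Q) (reweight a' Qh)
      \<le> sqrt (2 * C * (1 + 2 * C * La) / a0 * W2 Q Qh)"
    using lipschitz_reweighting.W2_reweight_le[OF reweighting]
    by (intro W2_le_sqrt_mult_W2_if_expected_dist_bound[OF _ product_coupling])
  then show ?thesis using assms by (simp add: reweight_a')
qed

end
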